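(* Let $\mu_0\in\mathcal{P}(\mathbb{Z})$, $\varepsilon>0$ and $R\in\mathbb{N}$ with $R>R_{\mu_0}(\varepsilon)$. Then for all $n\in\mathbb{N}$ and all $w\in\Omega^{(0)}_n(\mu_0,2^{-R}\varepsilon)$, $|w_n|\le R+2\varepsilon n$.
   Context: $\overline{\mathbb{Z}}=\mathbb{Z}\cup\{\pm\infty\}$ with metric $d(h,k)=|\varphi(h)-\varphi(k)|$, $\varphi(\pm\infty)=\pm1$, $\varphi(k)=1-2^{-k}$ ($k\ge0$), $\varphi(k)=-1+2^{-|k|}$ ($k<0$). $\mathcal{P}(\mathbb{Z})$ is viewed inside $\mathcal{P}(\overline{\mathbb{Z}})$. For signed measures, $\|\nu\|=\sup\{\int f\,d\nu: f\text{ 1-Lipschitz for }d,\ \sup|f|\le1\}$; $B(\mu,\varepsilon)=\{\nu\in\mathcal{P}(\overline{\mathbb{Z}}):\|\nu-\mu\|<\varepsilon\}$. $\Omega^{(0)}_n$ is the set of $w=(w_1,\dots,w_n)\in\mathbb{Z}^n$ with $w_1=0$ and $|w_i-w_{i+1}|=1$; $\ell(w)=\frac1n\sum_{j}\delta_{w_j}$; $\Omega^{(0)}_n(\mu,\varepsilon)=\{w\in\Omega^{(0)}_n:\ell(w)\in B(\mu,\varepsilon)\}$. $R_{\mu_0}(\varepsilon)=\min\{R\in\mathbb{N}:\mu_0(\{-R+1,\dots,R-1\})>1-\varepsilon\}$. *)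

theory Defs
  imports "HOL-Probability.Probability"
begin

datatype zbar = Fin int | PInf | MInf

fun phi :: "zbar \<Rightarrow> real" where
  "phi PInf = 1"
| "phi MInf = -1"
| "phi (Fin k) = (if k \<ge> 0 then 1 - 2 powr (- real_of_int k) else -1 + 2 powr (- real_of_int \<bar>k\<bar>))"

definition dZ :: "zbar \<Rightarrow> zbar \<Rightarrow> real" where
  "dZ h k = \<bar>phi h - phi k\<bar>"

definition Lip1 :: "(zbar \<Rightarrow> real) set" where
  "Lip1 = {f. (\<forall>h k. \<bar>f h - f k\<bar> \<le> dZ h k) \<and> (\<forall>h. \<bar>f h\<bar> \<le> 1)}"

text \<open>Norm of the signed measure nu - mu for probability measures on the countable
  space zbar (every such measure is a pmf).\<close>
definition dist_norm :: "zbar pmf \<Rightarrow> zbar pmf \<Rightarrow> real" where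
  "dist_norm nu mu = (SUP f\<in>Lip1. measure_pmf.expectation nu f - measure_pmf.expectation mu f)"

definition embed :: "int pmf \<Rightarrow> zbar pmf" where
  "embed mu = map_pmf Fin mu"

definition Ball_Z :: "zbar pmf \<Rightarrow> real \<Rightarrow> zbar pmf set" where
  "Ball_Z mu eps = {nu. dist_norm nu mu < eps}"

text \<open>Walks w = (w_1,...,w_n) as lists of length n (w_i = w ! (i-1)).\<close>
definition Omega0 :: "nat \<Rightarrow> int list set" where
  "Omega0 n = {w. length w = n \<and> n \<ge> 1 \<and> w ! 0 = 0 \<and>
      (\<forall>i. i + 1 < n \<longrightarrow> \<bar>w ! i - w ! (i + 1)\<bar> = 1)}"

definition ell :: "int list \<Rightarrow> zbar pmf" where
  "ell w = pmf_of_multiset (mset (map Fin w))"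

definition Omega0_ball :: "nat \<Rightarrow> int pmf \<Rightarrow> real \<Rightarrow> int list set" where
  "Omega0_ball n mu eps = {w \<in> Omega0 n. ell w \<in> Ball_Z (embed mu) eps}"

definition R_mu :: "int pmf \<Rightarrow> real \<Rightarrow> nat" where
  "R_mu mu eps = (LEAST R::nat. measure_pmf.prob mu {- int R + 1 .. int R - 1} > 1 - eps)"

end

theory Submission
  imports Defs
begin

(* Test the empirical measure against f = max 0 (|phi| - (1 - 2^(1-R))), which is 1-Lipschitz
   for d, bounded by 2^(1-R) and zero on |k| < R. Since R > R_mu0(eps), f vanishes on a set of
   mu0-mass > 1 - eps, so its mu0-expectation is at most 2^(1-R) eps, and for w in the ball of
   radius 2^(-R) eps the empirical mean of f is at most 3 * 2^(-R) eps. On the other hand a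
   nearest-neighbour walk ending at height M = |w_n| visits every level v in R..M, where
   f = 2^(1-R) - 2^(-v); as the 2^(-v) sum to at most 2^(1-R), the empirical mean is at least
   (M - R) 2^(1-R) / n. Comparing the two bounds gives M - R <= (3/2) eps n. *)

lemma powr_minus_eq_half_power: "2 powr (- real m) = (1/2::real) ^ m"
  by (simp add: powr_minus powr_realpow power_one_over inverse_eq_divide)

lemma abs_phi_Fin: "\<bar>phi (Fin k)\<bar> = 1 - (1/2) ^ nat \<bar>k\<bar>"
proof -
  have "2 powr (- real_of_int \<bar>k\<bar>) = (1/2) ^ nat \<bar>k\<bar>"
    using powr_minus_eq_half_power[of "nat \<bar>k\<bar>"] by simp
  moreover have "(1/2::real) ^ nat \<bar>k\<bar> \<le> 1"
    by (simp add: power_le_one)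
  ultimately show ?thesis by (auto simp: abs_if)
qed

lemma abs_phi_le_1: "\<bar>phi h\<bar> \<le> 1"
proof (cases h)
  case (Fin k)
  then show ?thesis by (simp only: abs_phi_Fin) simp
qed auto

lemma sum_power_half_le: "(\<Sum>v=R..M. (1/2::real) ^ v) \<le> 2 * (1/2) ^ R"
proof (cases "R \<le> M")
  case True
  have "(\<Sum>v=R..M. (1/2::real) ^ v) = 2 * (1/2) ^ R - 2 * (1/2) ^ Suc M"
    using sum_gp[of "1/2::real" R M] True by (auto simp: field_simps)
  then show ?thesis by simp
qed simp

lemma double_half_power:
  assumes "1 \<le> R"
  shows "2 * (1/2::real) ^ R = (1/2) ^ (R - 1)"
proof -
  obtain m where "R = Suc m"
    using assms by (cases R) auto
  then show ?thesis by simp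
qed

definition tail_test :: "nat \<Rightarrow> zbar \<Rightarrow> real" where
  "tail_test R h = max 0 (\<bar>phi h\<bar> - (1 - 2 * (1/2) ^ R))"

lemma tail_test_Fin: "tail_test R (Fin k) = max 0 (2 * (1/2) ^ R - (1/2) ^ nat \<bar>k\<bar>)"
  by (simp only: tail_test_def abs_phi_Fin)

lemma tail_test_nonneg: "0 \<le> tail_test R h"
  by (simp add: tail_test_def)

lemma tail_test_le: "tail_test R h \<le> 2 * (1/2) ^ R"
  using abs_phi_le_1[of h] by (simp add: tail_test_def)

lemma tail_test_Fin_eq_0:
  assumes "\<bar>k\<bar> < int R"
  shows "tail_test R (Fin k) = 0"
proof -
  have "nat \<bar>k\<bar> \<le> R - 1" and "1 \<le> R"
    using assms by auto
  then have "2 * (1/2::real) ^ R \<le> (1/2) ^ nat \<bar>k\<bar>"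
    by (simp add: double_half_power power_decreasing)
  then show ?thesis by (simp add: tail_test_Fin)
qed

lemma tail_test_Lip1:
  assumes "1 \<le> R"
  shows "tail_test R \<in> Lip1"
proof -
  have max_diff: "\<bar>max 0 (a - c) - max 0 (b - c)\<bar> \<le> \<bar>a - b\<bar>" for a b c :: real
    by (auto simp: max_def)
  have "\<bar>tail_test R h - tail_test R k\<bar> \<le> dZ h k" for h k
  proof -
    have "\<bar>tail_test R h - tail_test R k\<bar> \<le> \<bar>\<bar>phi h\<bar> - \<bar>phi k\<bar>\<bar>"
      unfolding tail_test_def by (rule max_diff)
    also have "\<dots> \<le> dZ h k"
      unfolding dZ_def by (rule abs_triangle_ineq3)
    finally show ?thesis .
  qed
  moreover have "2 * (1/2::real) ^ R \<le> 1"
    using assms by (simp add: double_half_power power_le_one)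
  then have "\<bar>tail_test R h\<bar> \<le> 1" for h
    using tail_test_nonneg[of R h] tail_test_le[of R h] by simp
  ultimately show ?thesis by (simp add: Lip1_def)
qed

lemma integrable_measure_pmf_bounded:
  fixes f :: "'a \<Rightarrow> real"
  assumes "\<And>x. \<bar>f x\<bar> \<le> B"
  shows "integrable (measure_pmf p) f"
  by (rule measure_pmf.integrable_const_bound[where B=B]) (use assms in auto)

lemma expectation_diff_le_dist_norm:
  assumes "f \<in> Lip1"
  shows "measure_pmf.expectation nu f - measure_pmf.expectation mu f \<le> dist_norm nu mu"
  unfolding dist_norm_def
proof (rule cSUP_upper[OF assms])
  have "measure_pmf.expectation nu g - measure_pmf.expectation mu g \<le> 2" if "g \<in> Lip1" for g
  proof -
    have bound: "\<bar>g x\<bar> \<le> 1" for x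
      using that by (simp add: Lip1_def)
    then have int: "integrable (measure_pmf p) g" for p
      by (rule integrable_measure_pmf_bounded)
    have "measure_pmf.expectation nu g \<le> 1"
      using bound by (intro measure_pmf.integral_le_const int AE_I2) (simp add: abs_le_iff)
    moreover have "-1 \<le> measure_pmf.expectation mu g"
      using bound by (intro measure_pmf.integral_ge_const int AE_I2) (simp add: abs_le_iff)
    ultimately show ?thesis by simp
  qed
  then show "bdd_above ((\<lambda>f. measure_pmf.expectation nu f - measure_pmf.expectation mu f) ` Lip1)"
    by (auto intro!: bdd_aboveI[where M=2])
qed

lemma ell_eq_map_pmf_of_set:
  assumes "w \<noteq> []"
  shows "ell w = map_pmf (\<lambda>j. Fin (w ! j)) (pmf_of_set {..<length w})"
proof -
  have "map (\<lambda>j. Fin (w ! j)) [0..<length w] = map Fin w"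
    by (rule nth_equalityI) simp_all
  then have "image_mset (\<lambda>j. Fin (w ! j)) (mset_set {..<length w}) = mset (map Fin w)"
    by (metis mset_map mset_set_upto_eq_mset_upto)
  moreover have "map_pmf (\<lambda>j. Fin (w ! j)) (pmf_of_set {..<length w})
                   = pmf_of_multiset (image_mset (\<lambda>j. Fin (w ! j)) (mset_set {..<length w}))"
    using assms by (intro map_pmf_of_set) auto
  ultimately show ?thesis
    by (simp add: ell_def)
qed

lemma expectation_ell:
  assumes "w \<noteq> []"
  shows "measure_pmf.expectation (ell w) f = (\<Sum>j<length w. f (Fin (w ! j))) / length w"
  using assms by (simp add: ell_eq_map_pmf_of_set) (subst integral_pmf_of_set; auto)

lemma Omega0_hits_levels:
  assumes "w \<in> Omega0 n" "k < n" "0 \<le> v" "v \<le> \<bar>w ! k\<bar>"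
  shows "\<exists>j\<le>k. \<bar>w ! j\<bar> = v"
  using assms(2-4)
proof (induction k)
  case 0
  then show ?case using assms(1) by (auto simp: Omega0_def)
next
  case (Suc k)
  have "\<bar>w ! k - w ! Suc k\<bar> = 1"
    using assms(1) Suc.prems by (auto simp: Omega0_def)
  show ?case
  proof (cases "v \<le> \<bar>w ! k\<bar>")
    case True
    then obtain j where "j \<le> k" "\<bar>w ! j\<bar> = v"
      using Suc by auto
    then show ?thesis
      by (intro exI[of _ j]) auto
  next
    case False
    with Suc.prems \<open>\<bar>w ! k - w ! Suc k\<bar> = 1\<close> have "\<bar>w ! Suc k\<bar> = v"
      by linarith
    then show ?thesis by blast
  qed
qed

lemma sum_tail_test_walk_ge:
  assumes "w \<in> Omega0 n"
  shows "(real_of_int \<bar>w ! (n - 1)\<bar> - real R) * (2 * (1/2) ^ R)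
           \<le> (\<Sum>j<n. tail_test R (Fin (w ! j)))"
proof (cases "int R \<le> \<bar>w ! (n - 1)\<bar>")
  case False
  then have "(real_of_int \<bar>w ! (n - 1)\<bar> - real R) * (2 * (1/2) ^ R) \<le> 0"
    by (intro mult_nonpos_nonneg) auto
  also have "0 \<le> (\<Sum>j<n. tail_test R (Fin (w ! j)))"
    by (intro sum_nonneg tail_test_nonneg)
  finally show ?thesis .
next
  case True
  define M where "M = nat \<bar>w ! (n - 1)\<bar>"
  have "R \<le> M" and n: "n \<ge> 1"
    using True assms by (auto simp: M_def Omega0_def)
  have "\<exists>j<n. \<bar>w ! j\<bar> = int v" if "v \<in> {R..M}" for v
  proof -
    have "int v \<le> \<bar>w ! (n - 1)\<bar>"
      using that by (simp add: M_def le_nat_iff)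
    then obtain j where "j \<le> n - 1" "\<bar>w ! j\<bar> = int v"
      using Omega0_hits_levels[OF assms, of "n - 1" "int v"] n by auto
    then show ?thesis
      using n by (intro exI[of _ j]) auto
  qed
  then obtain J where J: "\<And>v. v \<in> {R..M} \<Longrightarrow> J v < n \<and> \<bar>w ! J v\<bar> = int v"
    by metis
  have "inj_on J {R..M}"
    by (rule inj_onI) (metis J of_nat_eq_iff)
  have "(real M - real R) * (2 * (1/2) ^ R)
        \<le> real (Suc M - R) * (2 * (1/2) ^ R) - (\<Sum>v=R..M. (1/2) ^ v)"
    using sum_power_half_le[of R M] \<open>R \<le> M\<close> by (simp add: of_nat_diff algebra_simps)
  also have "\<dots> = (\<Sum>v=R..M. 2 * (1/2) ^ R - (1/2) ^ v)"
    by (simp add: sum_subtractf)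
  also have "\<dots> \<le> (\<Sum>v=R..M. tail_test R (Fin (w ! J v)))"
    by (intro sum_mono) (use J in \<open>auto simp: tail_test_Fin\<close>)
  also have "\<dots> = (\<Sum>j\<in>J ` {R..M}. tail_test R (Fin (w ! j)))"
    by (simp add: sum.reindex[OF \<open>inj_on J {R..M}\<close>])
  also have "\<dots> \<le> (\<Sum>j<n. tail_test R (Fin (w ! j)))"
    by (intro sum_mono2) (use J tail_test_nonneg in auto)
  finally show ?thesis
    by (simp add: M_def)
qed

lemma prob_centered_interval_tendsto_1:
  "(\<lambda>R. measure_pmf.prob mu {- int R + 1 .. int R - 1}) \<longlonglongrightarrow> 1"
proof -
  have "(\<Union>R. {- int R + 1 .. int R - 1}) = UNIV"
  proof safe
    fix k :: int
    have "k \<in> {- int (nat \<bar>k\<bar> + 1) + 1 .. int (nat \<bar>k\<bar> + 1) - 1}" by auto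
    then show "k \<in> (\<Union>R. {- int R + 1 .. int R - 1})" by blast
  qed auto
  moreover have "incseq (\<lambda>R. {- int R + 1 .. int R - 1})"
    by (auto simp: incseq_def)
  ultimately show ?thesis
    using Lim_measure_incseq[of "\<lambda>R. {- int R + 1 .. int R - 1}" "measure_pmf mu"]
    by (simp add: measure_pmf.emeasure_finite)
qed

lemma prob_R_mu_gt:
  assumes "eps > 0"
  shows "measure_pmf.prob mu {- int (R_mu mu eps) + 1 .. int (R_mu mu eps) - 1} > 1 - eps"
proof -
  have "\<forall>\<^sub>F R in sequentially. measure_pmf.prob mu {- int R + 1 .. int R - 1} > 1 - eps"
    using prob_centered_interval_tendsto_1 by (rule order_tendstoD) (use assms in simp)
  then have "\<exists>R. measure_pmf.prob mu {- int R + 1 .. int R - 1} > 1 - eps"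
    by (meson eventually_sequentially order_refl)
  then show ?thesis
    unfolding R_mu_def by (rule LeastI_ex)
qed

lemma expectation_tail_test_embed_le:
  assumes "eps > 0" and "R_mu mu eps \<le> R"
  shows "measure_pmf.expectation (embed mu) (tail_test R) \<le> 2 * (1/2) ^ R * eps"
proof -
  define I where "I = {- int (R_mu mu eps) + 1 .. int (R_mu mu eps) - 1}"
  have "measure_pmf.expectation (embed mu) (tail_test R)
          = measure_pmf.expectation mu (\<lambda>k. tail_test R (Fin k))"
    by (simp add: embed_def)
  also have "\<dots> \<le> measure_pmf.expectation mu (\<lambda>k. 2 * (1/2) ^ R * indicator (- I) k)"
  proof (rule integral_mono)
    fix k
    show "tail_test R (Fin k) \<le> 2 * (1/2) ^ R * indicator (- I) k"
      using assms(2) tail_test_le[of R "Fin k"] tail_test_Fin_eq_0[of k R]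
      by (auto simp: I_def indicator_def)
  next
    show "integrable (measure_pmf mu) (\<lambda>k. tail_test R (Fin k))"
      by (rule integrable_measure_pmf_bounded[where B="2 * (1/2) ^ R"])
        (simp add: abs_of_nonneg tail_test_nonneg tail_test_le)
    show "integrable (measure_pmf mu) (\<lambda>k. 2 * (1/2::real) ^ R * indicator (- I) k)"
      by (rule integrable_measure_pmf_bounded[where B="2 * (1/2) ^ R"]) (simp add: indicator_def)
  qed
  also have "\<dots> = 2 * (1/2) ^ R * (1 - measure_pmf.prob mu I)"
    by (simp add: measure_pmf.prob_compl[symmetric] Compl_eq_Diff_UNIV)
  also have "\<dots> \<le> 2 * (1/2) ^ R * eps"
    using prob_R_mu_gt[OF assms(1), of mu] by (intro mult_left_mono) (auto simp: I_def)
  finally show ?thesis .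
qed

lemma expectation_tail_test_ell_ge:
  assumes "w \<in> Omega0 n"
  shows "(real_of_int \<bar>w ! (n - 1)\<bar> - real R) * (2 * (1/2) ^ R)
           \<le> real n * measure_pmf.expectation (ell w) (tail_test R)"
proof -
  have "length w = n" and "n \<noteq> 0"
    using assms by (auto simp: Omega0_def)
  then have "real n * measure_pmf.expectation (ell w) (tail_test R)
               = (\<Sum>j<n. tail_test R (Fin (w ! j)))"
    by (subst expectation_ell) auto
  then show ?thesis
    using sum_tail_test_walk_ge[OF assms, of R] by simp
qed

theorem corollary2p4:
  fixes mu0 :: "int pmf" and eps :: real and R :: nat
  assumes "eps > 0" and "R > R_mu mu0 eps"
  shows "\<forall>n::nat. \<forall>w \<in> Omega0_ball n mu0 (2 powr (- real R) * eps).
           real_of_int \<bar>w ! (n - 1)\<bar> \<le> real R + 2 * eps * real n"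
proof (intro allI ballI)
  fix n w
  assume "w \<in> Omega0_ball n mu0 (2 powr (- real R) * eps)"
  define q :: real where "q = (1/2) ^ R"
  let ?E = "\<lambda>nu. measure_pmf.expectation nu (tail_test R)"
  have w: "w \<in> Omega0 n" and "dist_norm (ell w) (embed mu0) < q * eps"
    using \<open>w \<in> Omega0_ball n mu0 _\<close>
    by (simp_all add: Omega0_ball_def Ball_Z_def powr_minus_eq_half_power q_def)
  moreover have "?E (ell w) - ?E (embed mu0) \<le> dist_norm (ell w) (embed mu0)"
    using assms(2) by (intro expectation_diff_le_dist_norm tail_test_Lip1) simp
  moreover have "?E (embed mu0) \<le> 2 * q * eps"
    using expectation_tail_test_embed_le[OF assms(1)] assms(2) by (simp add: q_def)
  ultimately have "?E (ell w) \<le> 3 * q * eps"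
    by linarith
  then have "(real_of_int \<bar>w ! (n - 1)\<bar> - real R) * (2 * q) \<le> real n * (3 * q * eps)"
    using expectation_tail_test_ell_ge[OF w, of R] unfolding q_def
    by (meson mult_left_mono of_nat_0_le_iff order_trans)
  then have "(real_of_int \<bar>w ! (n - 1)\<bar> - real R) * 2 * q \<le> 3 * eps * real n * q"
    by (simp add: algebra_simps)
  then have "(real_of_int \<bar>w ! (n - 1)\<bar> - real R) * 2 \<le> 3 * eps * real n"
    by (rule mult_right_le_imp_le) (simp add: q_def)
  moreover have "0 \<le> eps * real n"
    using assms(1) by simp
  ultimately show "real_of_int \<bar>w ! (n - 1)\<bar> \<le> real R + 2 * eps * real n"
    by (simp add: algebra_simps)
qed

end
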